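(* Setting: $n$ agents on a connected, undirected weighted graph with Laplacian $L_n$; $L=L_n\otimes I_m$. For each $i$, $\Omega_i\subset\mathbb R^{q_i}$ is closed and convex, $f^i$ is strictly convex on an open set containing $\Omega_i$, $W_i\in\mathbb R^{m\times q_i}$, $d_i\in\mathbb R^m$ with $\sum_id_i=d_0$; $\Omega=\prod_i\Omega_i$, $f(x)=\sum_if^i(x_i)$, $W=[W_1,\dots,W_n]$, $\overline W=\mathrm{diag}\{W_1,\dots,W_n\}$, $d=[d_1^{\rm T},\dots,d_n^{\rm T}]^{\rm T}$; Slater's condition holds (some $x$ in the interior of $\Omega$ has $Wx=d_0$). Let $(x^*,\lambda^*,z^* )\in\Omega\times\mathbb R^{nm}\times\mathbb R^{nm}$ be an equilibrium of the DDFA inclusion, i.e. there is $g\in\partial f(x^* )$ with $P_\Omega[x^*-g+\overline W^{\rm T}\lambda^*]=x^*$, $d-\overline Wx^*-Lz^*=0$, $L\lambda^*=0$. Define $$V(x,\lambda,z)=f(x)-f(x^* )+(\lambda^* )^{\rm T}(d-\overline Wx)+\tfrac12\|x-x^*\|^2+\tfrac12\|\lambda-\lambda^*\|^2+\tfrac12\|z-z^*\|^2.$$ Then on $\Omega\times\mathbb R^{nm}\times\mathbb R^{nm}$, $V$ is positive definite: $V\ge0$, $V(x,\lambda,z)=0$ if and only if $(x,\lambda,z)=(x^*,\lambda^*,z^* )$, and $V(x,\lambda,z)\to\infty$ as $\|(x,\lambda,z)\|\to\infty$.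
   Context: $\partial f$ is the convex subdifferential; $P_\Omega$ the Euclidean projection onto $\Omega$. *)

theory Defs
  imports "HOL-Analysis.Analysis"
begin

definition strict_convex_on :: "'a::real_vector set \<Rightarrow> ('a \<Rightarrow> real) \<Rightarrow> bool" where
  "strict_convex_on S f \<longleftrightarrow> convex S \<and>
     (\<forall>x\<in>S. \<forall>y\<in>S. x \<noteq> y \<longrightarrow> (\<forall>u::real. 0 < u \<and> u < 1 \<longrightarrow>
        f ((1 - u) *\<^sub>R x + u *\<^sub>R y) < (1 - u) * f x + u * f y))"

definition subdifferential :: "('a::real_inner \<Rightarrow> real) \<Rightarrow> 'a set \<Rightarrow> 'a \<Rightarrow> 'a set" where
  "subdifferential f D x = {g. \<forall>y\<in>D. f y \<ge> f x + inner g (y - x)}"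

text \<open>Stacked decision vectors live in real^'N; coordinate p belongs to agent blk p.
  The block space of agent i (a copy of R^(q_i)) and the block projection x |-> x_i.\<close>
definition blockspace :: "('N::finite \<Rightarrow> 'n) \<Rightarrow> 'n \<Rightarrow> (real^'N) set" where
  "blockspace blk i = {v. \<forall>p. blk p \<noteq> i \<longrightarrow> v $ p = 0}"

definition blockproj :: "('N::finite \<Rightarrow> 'n) \<Rightarrow> 'n \<Rightarrow> real^'N \<Rightarrow> real^'N" where
  "blockproj blk i x = (\<chi> p. if blk p = i then x $ p else 0)"

definition connected_weighted_graph :: "('n::finite \<Rightarrow> 'n \<Rightarrow> real) \<Rightarrow> bool" where
  "connected_weighted_graph a \<longleftrightarrow>
     (\<forall>i j. a i j = a j i) \<and> (\<forall>i j. a i j \<ge> 0) \<and> (\<forall>i. a i i = 0) \<and>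
     (\<forall>i j. (\<lambda>u v. a u v > 0)\<^sup>*\<^sup>* i j)"

definition graph_laplacian :: "('n::finite \<Rightarrow> 'n \<Rightarrow> real) \<Rightarrow> real^'n^'n" where
  "graph_laplacian a = (\<chi> i j. (if i = j then (\<Sum>k\<in>UNIV. a i k) else 0) - a i j)"

text \<open>Kronecker product  Lap \<otimes> I_m  acting on R^(nm), indexed by pairs (agent, component).\<close>
definition kron_id :: "real^'n^'n \<Rightarrow> real^('n::finite \<times> 'm::finite)^('n \<times> 'm)" where
  "kron_id Lap = (\<chi> p q. Lap $ fst p $ fst q * (if snd p = snd q then 1 else 0))"

text \<open>Block-diagonal matrix diag{W_1,...,W_n}: W i k p is entry (k,p) of W_i (only p with blk p = i used).\<close>
definition Wbar :: "('N::finite \<Rightarrow> 'n::finite) \<Rightarrow> ('n \<Rightarrow> 'm::finite \<Rightarrow> 'N \<Rightarrow> real)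
                    \<Rightarrow> real^'N^('n \<times> 'm)" where
  "Wbar blk W = (\<chi> r p. if blk p = fst r then W (fst r) (snd r) p else 0)"

definition Wrow :: "('N::finite \<Rightarrow> 'n::finite) \<Rightarrow> ('n \<Rightarrow> 'm::finite \<Rightarrow> 'N \<Rightarrow> real)
                    \<Rightarrow> real^'N \<Rightarrow> real^'m" where
  "Wrow blk W x = (\<chi> k. \<Sum>p\<in>UNIV. W (blk p) k p * x $ p)"

definition dsum :: "real^('n::finite \<times> 'm::finite) \<Rightarrow> real^'m" where
  "dsum d = (\<chi> k. \<Sum>i\<in>UNIV. d $ (i, k))"

end

theory Submission
  imports Defs
begin

text \<open>
  The projection equation for \<open>x\<^sup>*\<close> is a variational inequality; combined with the
  subgradient inequality it shows that \<open>f x - f x\<^sup>* - \<langle>\<overline>W\<^sup>T\<lambda>\<^sup>*, x - x\<^sup>*\<rangle> \<ge> 0\<close> on \<open>\<Omega>\<close>.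
  Since \<open>L\<close> is symmetric and \<open>L\<lambda>\<^sup>* = 0\<close>, the second equilibrium equation gives
  \<open>\<langle>\<lambda>\<^sup>*, d - \<overline>W x\<^sup>*\<rangle> = \<langle>L\<lambda>\<^sup>*, z\<^sup>*\<rangle> = 0\<close>, so the first three terms of \<open>V\<close> form exactly
  that nonnegative gap. Hence \<open>V\<close> dominates half the squared distance to the equilibrium,
  which yields all three claims.
\<close>

lemma linear_blockproj: "linear (blockproj blk i)"
  by (auto simp: linear_iff blockproj_def vec_eq_iff)

lemma closed_blockwise:
  assumes "\<And>i. closed (Om i)"
  shows "closed {x. \<forall>i. blockproj blk i x \<in> Om i}"
proof -
  have "{x. \<forall>i. blockproj blk i x \<in> Om i} = (\<Inter>i. blockproj blk i -` Om i)" by auto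
  moreover have "continuous_on UNIV (blockproj blk i)" for i
    by (simp add: linear_blockproj linear_continuous_on linear_linear)
  ultimately show ?thesis
    using assms by (metis (no_types, lifting) closed_INT closed_vimage)
qed

lemma convex_blockwise:
  assumes "\<And>i. convex (Om i)"
  shows "convex {x. \<forall>i. blockproj blk i x \<in> Om i}"
proof -
  have "{x. \<forall>i. blockproj blk i x \<in> Om i} = (\<Inter>i. blockproj blk i -` Om i)" by auto
  then show ?thesis
    using assms by (simp add: convex_INT convex_linear_vimage linear_blockproj)
qed

lemma transpose_kron_id_graph_laplacian:
  assumes "\<And>i j. a i j = a j i"
  shows "transpose (kron_id (graph_laplacian a)) = kron_id (graph_laplacian a)"
  using assms unfolding kron_id_def graph_laplacian_def transpose_def
  by (auto simp: vec_eq_iff intro!: sum.cong)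

lemma inner_symmetric_matrix_kernel:
  fixes L :: "real^'n^'n"
  assumes "transpose L = L" and "L *v u = 0"
  shows "inner u (L *v v) = 0"
proof -
  have "inner u (L *v v) = inner (transpose L *v u) v"
    by (simp add: dot_lmul_matrix)
  with assms show ?thesis by simp
qed

lemma projected_subgradient_optimality:
  assumes "convex S" and "closed S" and "S \<subseteq> D" and "x \<in> S"
    and "g \<in> subdifferential f D xs"
    and "closest_point S (xs - g + h) = xs"
  shows "f xs + inner h (x - xs) \<le> f x"
proof -
  have "inner (xs - g + h - xs) (x - xs) \<le> 0"
    using closest_point_dot[OF assms(1,2,4), of "xs - g + h"] assms(6) by simp
  then have "inner h (x - xs) \<le> inner g (x - xs)"
    by (simp add: inner_diff_left)
  moreover have "f xs + inner g (x - xs) \<le> f x"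
    using assms(3-5) unfolding subdifferential_def by blast
  ultimately show ?thesis by linarith
qed

lemma positive_definite_radially_unbounded:
  fixes F :: "'a::real_normed_vector \<Rightarrow> real"
  assumes "\<And>p. p \<in> S \<Longrightarrow> c * (norm (p - p0))\<^sup>2 \<le> F p"
    and "c > 0" and "F p0 = 0"
  shows "(\<forall>p\<in>S. 0 \<le> F p) \<and> (\<forall>p\<in>S. F p = 0 \<longleftrightarrow> p = p0)
       \<and> (\<forall>B. \<exists>R. \<forall>p\<in>S. R \<le> norm p \<longrightarrow> B \<le> F p)"
proof (intro conjI allI ballI)
  fix p assume "p \<in> S"
  then show "0 \<le> F p"
    using assms(1,2) by (meson order_trans mult_nonneg_nonneg less_imp_le zero_le_power2)
  show "F p = 0 \<longleftrightarrow> p = p0"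
    using assms(1)[OF \<open>p \<in> S\<close>] assms(2,3)
    by (auto simp: mult_le_0_iff)
next
  fix B
  define r where "r = sqrt (\<bar>B\<bar> / c)"
  show "\<exists>R. \<forall>p\<in>S. R \<le> norm p \<longrightarrow> B \<le> F p"
  proof (intro exI ballI impI)
    fix p assume "p \<in> S" and "norm p0 + r \<le> norm p"
    then have "r \<le> norm (p - p0)"
      using norm_triangle_ineq2[of p p0] by linarith
    moreover have "0 \<le> \<bar>B\<bar> / c" "0 \<le> r"
      using assms(2) by (simp_all add: r_def)
    ultimately have "\<bar>B\<bar> / c \<le> (norm (p - p0))\<^sup>2"
      using assms(2) power_mono[of r "norm (p - p0)" 2] by (simp add: r_def)
    then have "\<bar>B\<bar> \<le> c * (norm (p - p0))\<^sup>2"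
      using assms(2) by (simp add: divide_le_eq mult.commute)
    then show "B \<le> F p"
      using assms(1)[OF \<open>p \<in> S\<close>] by linarith
  qed
qed

theorem lemma7:
  fixes a :: "'n::finite \<Rightarrow> 'n \<Rightarrow> real"
    and blk :: "'N::finite \<Rightarrow> 'n"
    and Om :: "'n \<Rightarrow> (real^'N) set"
    and U :: "'n \<Rightarrow> (real^'N) set"
    and fi :: "'n \<Rightarrow> real^'N \<Rightarrow> real"
    and W :: "'n \<Rightarrow> 'm::finite \<Rightarrow> 'N \<Rightarrow> real"
    and d :: "real^('n \<times> 'm)"
    and d0 :: "real^'m"
    and Omega D :: "(real^'N) set"
    and f :: "real^'N \<Rightarrow> real"
    and L :: "real^('n \<times> 'm)^('n \<times> 'm)"
    and xs x g :: "real^'N"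
    and lams zs lam z :: "real^('n \<times> 'm)"
    and V :: "real^'N \<Rightarrow> real^('n \<times> 'm) \<Rightarrow> real^('n \<times> 'm) \<Rightarrow> real"
  assumes graph: "connected_weighted_graph a"
    and L_def: "L = kron_id (graph_laplacian a)"
    and blk_surj: "surj blk"
    and Om_sub: "\<And>i. Om i \<subseteq> blockspace blk i"
    and Om_closed: "\<And>i. closed (Om i)"
    and Om_convex: "\<And>i. convex (Om i)"
    and U_open: "\<And>i. openin (top_of_set (blockspace blk i)) (U i)"
    and U_sup: "\<And>i. Om i \<subseteq> U i"
    and fi_strict: "\<And>i. strict_convex_on (U i) (fi i)"
    and d0_def: "d0 = dsum d"
    and Omega_def: "Omega = {x. \<forall>i. blockproj blk i x \<in> Om i}"
    and D_def: "D = {x. \<forall>i. blockproj blk i x \<in> U i}"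
    and f_def: "\<And>x. f x = (\<Sum>i\<in>UNIV. fi i (blockproj blk i x))"
    and slater: "\<exists>x\<in>interior Omega. Wrow blk W x = d0"
    and xs_in: "xs \<in> Omega"
    and g_sub: "g \<in> subdifferential f D xs"
    and eq1: "closest_point Omega (xs - g + transpose (Wbar blk W) *v lams) = xs"
    and eq2: "d - Wbar blk W *v xs - L *v zs = 0"
    and eq3: "L *v lams = 0"
    and V_def: "\<And>x lam z. V x lam z = f x - f xs + inner lams (d - Wbar blk W *v x)
        + (1/2) * (norm (x - xs))\<^sup>2 + (1/2) * (norm (lam - lams))\<^sup>2 + (1/2) * (norm (z - zs))\<^sup>2"
  shows "(\<forall>x\<in>Omega. \<forall>lam z. V x lam z \<ge> 0)
       \<and> (\<forall>x\<in>Omega. \<forall>lam z. V x lam z = 0 \<longleftrightarrow> (x, lam, z) = (xs, lams, zs))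
       \<and> (\<forall>B. \<exists>R. \<forall>x\<in>Omega. \<forall>lam z. norm (x, lam, z) \<ge> R \<longrightarrow> V x lam z \<ge> B)"
proof -
  let ?Wb = "Wbar blk W"
  have "transpose L = L"
    using graph transpose_kron_id_graph_laplacian
    unfolding L_def connected_weighted_graph_def by blast
  then have gap_xs: "inner lams (d - ?Wb *v xs) = 0"
    using eq2 eq3 inner_symmetric_matrix_kernel by (simp add: algebra_simps)
  have gap_nonneg: "0 \<le> f x - f xs + inner lams (d - ?Wb *v x)" if "x \<in> Omega" for x
  proof -
    have "f xs + inner (transpose ?Wb *v lams) (x - xs) \<le> f x"
      using projected_subgradient_optimality[OF _ _ _ that g_sub eq1] Om_closed Om_convex U_sup
      unfolding Omega_def D_def by (blast intro: closed_blockwise convex_blockwise)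
    moreover have "inner lams (d - ?Wb *v x) = inner lams (d - ?Wb *v xs) - inner lams (?Wb *v (x - xs))"
      by (simp add: matrix_vector_mult_diff_distrib inner_diff_right)
    ultimately show ?thesis
      using gap_xs by (simp add: dot_lmul_matrix)
  qed
  let ?F = "\<lambda>(x, lam, z). V x lam z"
  have "(1/2) * (norm (p - (xs, lams, zs)))\<^sup>2 \<le> ?F p" if "p \<in> Omega \<times> UNIV \<times> UNIV" for p
    using that gap_nonneg[of "fst p"] V_def by (auto simp: norm_Pair)
  moreover have "?F (xs, lams, zs) = 0"
    using V_def gap_xs by simp
  ultimately have "(\<forall>p\<in>Omega \<times> UNIV \<times> UNIV. 0 \<le> ?F p)
      \<and> (\<forall>p\<in>Omega \<times> UNIV \<times> UNIV. ?F p = 0 \<longleftrightarrow> p = (xs, lams, zs))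
      \<and> (\<forall>B. \<exists>R. \<forall>p\<in>Omega \<times> UNIV \<times> UNIV. R \<le> norm p \<longrightarrow> B \<le> ?F p)"
    by (intro positive_definite_radially_unbounded[where c = "1/2"]) auto
  then show ?thesis by fastforce
qed

end
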